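(* Let $1\leqslant k\leqslant d$ and let $F\subseteq S^d$ be a $k$-neighborly family of strings of maximum possible size (i.e., no $k$-neighborly family in $S^d$ has more elements). Then every string in $F$ has at most $d-k$ jokers.
   Context: Let $S=\{0,1,\ast\}$ and let $S^d$ be the set of strings of length $d$ over $S$; the symbol $\ast$ is called a joker. For $x,y\in S^d$, $d(x,y)$ is the number of positions $i\in[d]$ such that one of $x_i,y_i$ equals $0$ and the other equals $1$. A family $F\subseteq S^d$ is $k$-neighborly if $1\leqslant d(x,y)\leqslant k$ for all distinct $x,y\in F$. *)

theory Defs
  imports Main
begin

datatype sym = Zero | One | Joker

text \<open>Strings of length d over S = {0,1,*}, represented as lists.\<close>
definition strings :: "nat \<Rightarrow> sym list set" where
  "strings d = {x. length x = d}"

definition dist :: "sym list \<Rightarrow> sym list \<Rightarrow> nat" where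
  "dist x y = card {i. i < length x \<and> i < length y \<and>
      ((x ! i = Zero \<and> y ! i = One) \<or> (x ! i = One \<and> y ! i = Zero))}"

definition neighborly :: "nat \<Rightarrow> nat \<Rightarrow> sym list set \<Rightarrow> bool" where
  "neighborly d k F \<longleftrightarrow> F \<subseteq> strings d \<and>
     (\<forall>x\<in>F. \<forall>y\<in>F. x \<noteq> y \<longrightarrow> 1 \<le> dist x y \<and> dist x y \<le> k)"

definition jokers :: "sym list \<Rightarrow> nat" where
  "jokers x = card {i. i < length x \<and> x ! i = Joker}"

end

theory Submission
  imports Defs
begin

text \<open>If some x in F had more than d - k jokers, then x would have fewer than k
  non-joker positions, so d(x,y) < k for every y. Replacing x by the two strings
  obtained from x by setting one of its jokers to 0 and to 1 changes each
  distance to x by at most one, keeps the two new strings at distance 1 from each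
  other, and yields a strictly larger k-neighborly family.\<close>

lemma dist_commute: "dist x y = dist y x"
  unfolding dist_def by (rule arg_cong[where f=card]) auto

lemma jokers_le_length: "jokers x \<le> length x"
  unfolding jokers_def by (rule card_mono[of "{..<length x}", simplified]) auto

lemma dist_le_length_minus_jokers: "dist x y \<le> length x - jokers x"
proof -
  let ?J = "{i. i < length x \<and> x ! i = Joker}"
  let ?N = "{i. i < length x \<and> x ! i \<noteq> Joker}"
  have "card ?J + card ?N = card (?J \<union> ?N)"
    by (rule card_Un_disjoint[symmetric]) auto
  also have "?J \<union> ?N = {..<length x}" by auto
  finally have "card ?N = length x - jokers x"
    unfolding jokers_def by simp
  moreover have "dist x y \<le> card ?N"
    unfolding dist_def by (intro card_mono) auto
  ultimately show ?thesis by simp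
qed

lemma dist_list_update_le: "dist (x[i := a]) y \<le> dist x y + 1"
proof -
  let ?D = "{j. j < length x \<and> j < length y \<and>
      ((x ! j = Zero \<and> y ! j = One) \<or> (x ! j = One \<and> y ! j = Zero))}"
  have "dist (x[i := a]) y \<le> card (insert i ?D)"
    unfolding dist_def by (intro card_mono) (auto simp: nth_list_update)
  also have "\<dots> \<le> card ?D + 1" by (simp add: card_insert_le_m1)
  finally show ?thesis unfolding dist_def .
qed

lemma dist_le_list_update_Joker:
  assumes "i < length x" "x ! i = Joker"
  shows "dist x y \<le> dist (x[i := a]) y"
  unfolding dist_def using assms by (intro card_mono) (auto simp: nth_list_update)

lemma dist_list_update_Zero_One:
  assumes "i < length x"
  shows "dist (x[i := Zero]) (x[i := One]) = 1"
proof -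
  have "{j. j < length (x[i := Zero]) \<and> j < length (x[i := One]) \<and>
      ((x[i := Zero] ! j = Zero \<and> x[i := One] ! j = One) \<or>
       (x[i := Zero] ! j = One \<and> x[i := One] ! j = Zero))} = {i}"
    using assms by (auto simp: nth_list_update)
  then show ?thesis unfolding dist_def by simp
qed

lemma dist_list_update_Joker_eq_0:
  assumes "i < length x" "x ! i = Joker"
  shows "dist x (x[i := a]) = 0"
proof -
  have "{j. j < length x \<and> j < length (x[i := a]) \<and>
      ((x ! j = Zero \<and> x[i := a] ! j = One) \<or> (x ! j = One \<and> x[i := a] ! j = Zero))} = {}"
    using assms by (auto simp: nth_list_update)
  then show ?thesis unfolding dist_def by simp
qed

lemma finite_strings: "finite (strings d)"
proof -
  have "(UNIV :: sym set) = {Zero, One, Joker}"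
    using sym.exhaust by blast
  then have "finite (UNIV :: sym set)"
    by (metis finite.emptyI finite.insertI)
  then show ?thesis
    using finite_lists_length_eq[of UNIV d] unfolding strings_def by simp
qed

lemma neighborly_subset: "neighborly d k F \<Longrightarrow> G \<subseteq> F \<Longrightarrow> neighborly d k G"
  unfolding neighborly_def by blast

lemma neighborly_insert:
  "neighborly d k (insert z F) \<longleftrightarrow> neighborly d k F \<and> z \<in> strings d \<and>
     (\<forall>y\<in>F. y \<noteq> z \<longrightarrow> 1 \<le> dist z y \<and> dist z y \<le> k)"
  unfolding neighborly_def by (auto simp: dist_commute)

definition split_joker :: "sym list set \<Rightarrow> sym list \<Rightarrow> nat \<Rightarrow> sym list set" where
  "split_joker F x i = insert (x[i := Zero]) (insert (x[i := One]) (F - {x}))"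

context
  fixes d k :: nat and F :: "sym list set" and x :: "sym list" and i :: nat
  assumes neighborly: "neighborly d k F"
    and x_in: "x \<in> F" and i_less: "i < length x" and x_i: "x ! i = Joker"
begin

lemma list_update_Joker_notin: "x[i := a] \<notin> F - {x}"
  using neighborly x_in dist_list_update_Joker_eq_0[OF i_less x_i]
  unfolding neighborly_def by fastforce

lemma neighborly_split_joker:
  assumes "1 \<le> k" and close: "\<And>y. y \<in> F \<Longrightarrow> dist x y < k"
  shows "neighborly d k (split_joker F x i)"
proof -
  have x_len: "length x = d"
    using neighborly x_in unfolding neighborly_def strings_def by auto
  have update_close: "1 \<le> dist (x[i := a]) y \<and> dist (x[i := a]) y \<le> k"
    if "y \<in> F - {x}" for a y
  proof -
    have "1 \<le> dist x y"
      using neighborly x_in that unfolding neighborly_def by auto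
    then show ?thesis
      using dist_le_list_update_Joker[OF i_less x_i, of y a] dist_list_update_le[of x i a y]
        close[of y] that by fastforce
  qed
  have "neighborly d k (F - {x})"
    using neighborly by (rule neighborly_subset) blast
  moreover have "x[i := a] \<in> strings d" for a
    using x_len by (simp add: strings_def)
  ultimately show ?thesis
    unfolding split_joker_def neighborly_insert
    using update_close dist_list_update_Zero_One[OF i_less] \<open>1 \<le> k\<close> by auto
qed

lemma card_split_joker:
  assumes "finite F"
  shows "card (split_joker F x i) = card F + 1"
proof -
  have "x[i := Zero] \<noteq> x[i := One]"
    using i_less by (metis nth_list_update_eq sym.distinct(1))
  moreover have "0 < card F"
    using assms x_in by (auto simp: card_gt_0_iff)
  ultimately show ?thesis
    using assms x_in list_update_Joker_notin unfolding split_joker_def by simp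
qed

end

lemma jokers_pos_obtain:
  assumes "0 < jokers x"
  obtains i where "i < length x" "x ! i = Joker"
  using assms unfolding jokers_def by (metis (mono_tags) Collect_empty_eq card.empty less_irrefl)

theorem lemma1:
  fixes d k :: nat and F :: "sym list set"
  assumes "1 \<le> k" and "k \<le> d"
    and "neighborly d k F"
    and "\<forall>G. neighborly d k G \<longrightarrow> card G \<le> card F"
  shows "\<forall>x\<in>F. jokers x \<le> d - k"
proof (rule ccontr)
  assume "\<not> (\<forall>x\<in>F. jokers x \<le> d - k)"
  then obtain x where x_in: "x \<in> F" and many: "d - k < jokers x" by auto
  have F_strings: "F \<subseteq> strings d"
    using assms(3) unfolding neighborly_def by simp
  then have x_len: "length x = d"
    using x_in unfolding strings_def by auto
  have "0 < jokers x"
    using many by simp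
  then obtain i where i: "i < length x" "x ! i = Joker"
    by (rule jokers_pos_obtain)
  have "dist x y < k" for y
    using dist_le_length_minus_jokers[of x y] jokers_le_length[of x] x_len many by linarith
  then have "neighborly d k (split_joker F x i)"
    by (rule neighborly_split_joker[OF assms(3) x_in i assms(1)])
  then have "card (split_joker F x i) \<le> card F"
    using assms(4) by blast
  moreover have "finite F"
    using F_strings finite_strings by (rule finite_subset)
  ultimately show False
    using card_split_joker[OF assms(3) x_in i] by simp
qed

end
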